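(* Let $\Sigma$ be an alphabet, $n\ge1$, $L\ge 1$, and $B$ a fixed integer. Let $h_1:\Sigma\to[0,2^L)$ be a random function whose values $h_1(c)$, $c\in\Sigma$, are mutually independent and uniformly distributed on $[0,2^L)$, and define $h(x_1,\dots,x_n)=\left(\sum_{i=1}^n B^{n-i}h_1(x_i)\right)\bmod 2^L$. Then: (i) if $n$ is even and $B$ is odd, $h$ is not uniform (there exist an $n$-gram $x$ and a value $y$ with $P(h(x)=y)\neq 2^{-L}$); (ii) if $B$ is even (and $n\ge1$ arbitrary), or if $B$ and $n$ are both odd, $h$ is uniform: $P(h(x)=y)=2^{-L}$ for every $n$-gram $x$ and every $y\in[0,2^L)$; (iii) if $n\ge 2$ and $|\Sigma|\ge 2$, then for every $B$ there exist distinct $n$-grams $w_1,w_2$ with $P(h(w_1)=h(w_2))>2^{-L}$; in particular $h$ is neither pairwise independent nor 2-universal.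
   Context: An $n$-gram is an element of $\Sigma^n$. A random hash function $h:\Sigma^n\to[0,2^L)$ is pairwise independent if $P(h(x_1)=y\wedge h(x_2)=z)=4^{-L}$ for all distinct $n$-grams $x_1,x_2$ and all $y,z$; it is 2-universal if $P(h(x_1)=h(x_2))\le 2^{-L}$ for all distinct $x_1,x_2$. *)

theory Defs
  imports "HOL-Probability.Probability"
begin

text \<open>The random character hash h1 : 'a \<Rightarrow> [0,2^L)
  with mutually independent uniform values is the uniform distribution on all
  functions 'a \<Rightarrow> {0..<2^L}.\<close>

definition char_hash :: "nat \<Rightarrow> ('a::finite \<Rightarrow> int) pmf" where
  "char_hash L = pmf_of_set (PiE UNIV (\<lambda>_. {0..<2^L}))"

text \<open>n-grams are lists of length n; index i (0-based) corresponds to x_{i+1}.\<close>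

definition ngram_hash :: "nat \<Rightarrow> int \<Rightarrow> nat \<Rightarrow> ('a \<Rightarrow> int) \<Rightarrow> 'a list \<Rightarrow> int" where
  "ngram_hash L B n h1 xs = (\<Sum>i<n. B ^ (n - 1 - i) * h1 (xs ! i)) mod 2 ^ L"

definition recursive_hash :: "nat \<Rightarrow> int \<Rightarrow> nat \<Rightarrow> ('a::finite list \<Rightarrow> int) pmf" where
  "recursive_hash L B n = map_pmf (ngram_hash L B n) (char_hash L)"

definition ngrams :: "nat \<Rightarrow> 'a list set" where
  "ngrams n = {xs. length xs = n}"

definition uniform_hash :: "('b \<Rightarrow> int) pmf \<Rightarrow> 'b set \<Rightarrow> nat \<Rightarrow> bool" where
  "uniform_hash H X L \<longleftrightarrow>
     (\<forall>x\<in>X. \<forall>y\<in>{0..<2^L}. measure_pmf.prob H {h. h x = y} = 1 / 2 ^ L)"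

definition pairwise_independent :: "('b \<Rightarrow> int) pmf \<Rightarrow> 'b set \<Rightarrow> nat \<Rightarrow> bool" where
  "pairwise_independent H X L \<longleftrightarrow>
     (\<forall>x1\<in>X. \<forall>x2\<in>X. x1 \<noteq> x2 \<longrightarrow> (\<forall>y\<in>{0..<2^L}. \<forall>z\<in>{0..<2^L}.
        measure_pmf.prob H {h. h x1 = y \<and> h x2 = z} = 1 / 4 ^ L))"

definition two_universal :: "('b \<Rightarrow> int) pmf \<Rightarrow> 'b set \<Rightarrow> nat \<Rightarrow> bool" where
  "two_universal H X L \<longleftrightarrow>
     (\<forall>x1\<in>X. \<forall>x2\<in>X. x1 \<noteq> x2 \<longrightarrow> measure_pmf.prob H {h. h x1 = h x2} \<le> 1 / 2 ^ L)"

end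

theory Submission
  imports Defs
begin

(*
  The recursive n-gram hash is a linear form in the character hash values:
  h(x) = (sum over characters c of w_x(c) * h1(c)) mod 2^L, where the weight
  w_x(c) sums the powers B^(n-1-i) over the positions i at which x carries c.
  With h1 uniform on the cube [0,2^L)^Sigma, such a linear form is uniform on
  [0,2^L) as soon as one coefficient is a unit mod 2^L, i.e. odd: shifting a
  single coordinate maps any fibre injectively into any other.

  (i)/(ii) The weights of x add up to sum_i B^(n-1-i), which is odd exactly when
  B is even or n is odd.  If it is odd, some weight is odd and h(x) is uniform;
  if it is even, the constant n-gram hashes to even values only.
  (iii) For two characters a, b there are n-grams whose hash difference is
  k(h1(a) - h1(b)) with k even; they collide whenever h1(a) - h1(b) is 0 or
  2^(L-1) mod 2^L, which has probability 2/2^L.  A pairwise independent family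
  with values in [0,2^L) has collision probability exactly 2^-L.
*)

definition residue_cube :: "int \<Rightarrow> ('a \<Rightarrow> int) set" where
  "residue_cube M = PiE UNIV (\<lambda>_. {0..<M})"

lemma residue_cube_iff: "f \<in> residue_cube M \<longleftrightarrow> (\<forall>c. f c \<in> {0..<M})"
  by (auto simp: residue_cube_def PiE_UNIV_domain)

lemma finite_residue_cube: "finite (residue_cube M :: ('a::finite \<Rightarrow> int) set)"
  by (simp add: residue_cube_def finite_PiE)

lemma residue_cube_nonempty: "M > 0 \<Longrightarrow> residue_cube M \<noteq> {}"
  using residue_cube_iff[of "\<lambda>_. 0" M] by auto

lemma char_hash_eq: "char_hash L = pmf_of_set (residue_cube (2 ^ L))"
  by (simp add: char_hash_def residue_cube_def)

lemma card_eq_card_range_times_fibre: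
  assumes "finite A" "finite Y" "g ` A \<subseteq> Y"
    and fibre: "\<And>y. y \<in> Y \<Longrightarrow> card {x\<in>A. g x = y} = k"
  shows "card A = card Y * k"
proof -
  have "A = (\<Union>y\<in>Y. {x\<in>A. g x = y})" using assms(3) by auto
  also have "card \<dots> = (\<Sum>y\<in>Y. card {x\<in>A. g x = y})"
    using assms(1,2) by (intro card_UN_disjoint) auto
  also have "\<dots> = card Y * k" using fibre by simp
  finally show ?thesis .
qed

definition shift_coord :: "int \<Rightarrow> 'a \<Rightarrow> int \<Rightarrow> ('a \<Rightarrow> int) \<Rightarrow> 'a \<Rightarrow> int" where
  "shift_coord M c0 t f = f(c0 := (f c0 + t) mod M)"

lemma shift_coord_in_cube:
  "M > 0 \<Longrightarrow> f \<in> residue_cube M \<Longrightarrow> shift_coord M c0 t f \<in> residue_cube M"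
  by (simp add: residue_cube_iff shift_coord_def)

lemma shift_coord_inverse:
  assumes "f \<in> residue_cube M"
  shows "shift_coord M c0 (- t) (shift_coord M c0 t f) = f"
proof -
  have "((f c0 + t) mod M + - t) mod M = (f c0 + t + - t) mod M" by (rule mod_add_left_eq)
  also have "\<dots> = f c0" using assms by (simp add: residue_cube_iff)
  finally show ?thesis by (simp add: shift_coord_def)
qed

lemma linear_form_update:
  fixes w f :: "'a::finite \<Rightarrow> int"
  shows "(\<Sum>c\<in>UNIV. w c * (f(c0 := v)) c) = (\<Sum>c\<in>UNIV. w c * f c) + w c0 * (v - f c0)"
proof -
  have "(\<Sum>c\<in>UNIV. w c * (f(c0 := v)) c) - (\<Sum>c\<in>UNIV. w c * f c)
       = (\<Sum>c\<in>UNIV. if c = c0 then w c0 * (v - f c0) else 0)"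
    unfolding sum_subtractf[symmetric] by (rule sum.cong) (auto simp: algebra_simps)
  then show ?thesis by simp
qed

lemma linear_form_shift_coord:
  fixes w f :: "'a::finite \<Rightarrow> int"
  shows "(\<Sum>c\<in>UNIV. w c * shift_coord M c0 t f c) mod M = ((\<Sum>c\<in>UNIV. w c * f c) + w c0 * t) mod M"
proof -
  let ?S = "\<Sum>c\<in>UNIV. w c * f c"
  have shift_eq: "(f c0 + t) mod M - f c0 = t + M * (- ((f c0 + t) div M))"
    using minus_mult_div_eq_mod[of "f c0 + t" M] by (simp add: algebra_simps)
  have "(\<Sum>c\<in>UNIV. w c * shift_coord M c0 t f c) = ?S + w c0 * ((f c0 + t) mod M - f c0)"
    unfolding shift_coord_def by (rule linear_form_update)
  also have "\<dots> = ?S + w c0 * (t + M * (- ((f c0 + t) div M)))"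
    by (simp only: shift_eq)
  also have "\<dots> = ?S + w c0 * t + M * (- w c0 * ((f c0 + t) div M))"
    by (simp add: algebra_simps)
  finally show ?thesis by (simp only: mod_mult_self2)
qed

text \<open>If \<open>w c0\<close> is a unit mod \<open>M\<close>, a suitable shift of coordinate \<open>c0\<close> maps the fibre
  of the linear form over \<open>y1\<close> injectively into the fibre over \<open>y2\<close>.\<close>

lemma linear_form_fibre_mono:
  fixes w :: "'a::finite \<Rightarrow> int"
  assumes M: "M > 0" and unit: "coprime (w c0) M" and y2: "y2 \<in> {0..<M}"
  shows "card {f\<in>residue_cube M. (\<Sum>c\<in>UNIV. w c * f c) mod M = y1}
       \<le> card {f\<in>residue_cube M. (\<Sum>c\<in>UNIV. w c * f c) mod M = y2}"
proof -
  let ?fibre = "\<lambda>y. {f\<in>residue_cube M. (\<Sum>c\<in>UNIV. w c * f c) mod M = y}"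
  obtain u v where uv: "u * w c0 + v * M = 1"
    using bezout_int[of "w c0" M] unit by auto
  define t where "t = u * (y2 - y1)"
  have "w c0 * t = (u * w c0) * (y2 - y1)" by (simp add: t_def)
  also have "u * w c0 = 1 - v * M" using uv by linarith
  finally have "y1 + w c0 * t = y2 + M * (- v * (y2 - y1))" by (simp add: algebra_simps)
  then have "(y1 + w c0 * t) mod M = (y2 + M * (- v * (y2 - y1))) mod M" by (simp only:)
  also have "\<dots> = y2" using y2 by (simp only: mod_mult_self2) simp
  finally have shift_hits_y2: "(y1 + w c0 * t) mod M = y2" .
  have "inj_on (shift_coord M c0 t) (?fibre y1)"
    by (rule inj_on_inverseI[where g = "shift_coord M c0 (- t)"]) (simp add: shift_coord_inverse)
  moreover have "shift_coord M c0 t ` ?fibre y1 \<subseteq> ?fibre y2"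
  proof (rule image_subsetI)
    fix f assume f: "f \<in> ?fibre y1"
    have "(\<Sum>c\<in>UNIV. w c * shift_coord M c0 t f c) mod M = ((\<Sum>c\<in>UNIV. w c * f c) + w c0 * t) mod M"
      by (rule linear_form_shift_coord)
    also have "\<dots> = ((\<Sum>c\<in>UNIV. w c * f c) mod M + w c0 * t) mod M"
      by (simp only: mod_add_left_eq)
    also have "\<dots> = y2" using f shift_hits_y2 by simp
    finally show "shift_coord M c0 t f \<in> ?fibre y2" using f M by (simp add: shift_coord_in_cube)
  qed
  moreover have "finite (?fibre y2)" by (simp add: finite_residue_cube)
  ultimately show ?thesis by (rule card_inj_on_le)
qed

lemma linear_form_equidistributed:
  fixes w :: "'a::finite \<Rightarrow> int"
  assumes M: "M > 0" and unit: "coprime (w c0) M" and y: "y \<in> {0..<M}"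
  shows "card (residue_cube M :: ('a \<Rightarrow> int) set)
       = nat M * card {f\<in>residue_cube M. (\<Sum>c\<in>UNIV. w c * f c) mod M = y}"
proof -
  have "card (residue_cube M :: ('a \<Rightarrow> int) set)
      = card {0..<M} * card {f\<in>residue_cube M. (\<Sum>c\<in>UNIV. w c * f c) mod M = y}"
  proof (rule card_eq_card_range_times_fibre)
    show "finite (residue_cube M :: ('a \<Rightarrow> int) set)" by (rule finite_residue_cube)
    show "(\<lambda>f. (\<Sum>c\<in>UNIV. w c * f c) mod M) ` residue_cube M \<subseteq> {0..<M}" using M by auto
    show "card {f\<in>residue_cube M. (\<Sum>c\<in>UNIV. w c * f c) mod M = z}
        = card {f\<in>residue_cube M. (\<Sum>c\<in>UNIV. w c * f c) mod M = y}" if "z \<in> {0..<M}" for z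
      using linear_form_fibre_mono[of M w c0 y z] linear_form_fibre_mono[of M w c0 z y] M unit that y
      by simp
  qed simp
  then show ?thesis by simp
qed

lemma prob_linear_form_odd:
  fixes w :: "'a::finite \<Rightarrow> int"
  assumes odd: "odd (w c0)" and y: "y \<in> {0..<2^L}"
  shows "measure_pmf.prob (char_hash L) {f. (\<Sum>c\<in>UNIV. w c * f c) mod 2^L = y} = 1 / 2^L"
proof -
  let ?cube = "residue_cube (2^L) :: ('a \<Rightarrow> int) set"
  let ?fibre = "{f\<in>?cube. (\<Sum>c\<in>UNIV. w c * f c) mod 2^L = y}"
  have "coprime (w c0) (2^L)" using odd by simp
  then have cube: "real (card ?cube) = 2^L * real (card ?fibre)"
    using linear_form_equidistributed[of "2^L" w c0 y] y by simp
  have nonempty: "?cube \<noteq> {}" by (simp add: residue_cube_nonempty)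
  have finite: "finite ?cube" by (rule finite_residue_cube)
  have "card ?fibre \<noteq> 0"
  proof
    assume "card ?fibre = 0"
    then have "card ?cube = 0" using cube by simp
    then show False using nonempty finite by simp
  qed
  have "?cube \<inter> {f. (\<Sum>c\<in>UNIV. w c * f c) mod 2^L = y} = ?fibre" by blast
  then have "measure_pmf.prob (char_hash L) {f. (\<Sum>c\<in>UNIV. w c * f c) mod 2^L = y}
           = real (card ?fibre) / real (card ?cube)"
    unfolding char_hash_eq measure_pmf_of_set[OF nonempty finite] by simp
  also have "\<dots> = 1 / 2^L" using \<open>card ?fibre \<noteq> 0\<close> by (simp add: cube)
  finally show ?thesis .
qed

definition char_weight :: "int \<Rightarrow> nat \<Rightarrow> 'a list \<Rightarrow> 'a \<Rightarrow> int" where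
  "char_weight B n x c = (\<Sum>i<n. if x ! i = c then B ^ (n - 1 - i) else 0)"

lemma ngram_hash_linear_form:
  fixes f :: "'a::finite \<Rightarrow> int"
  shows "ngram_hash L B n f x = (\<Sum>c\<in>UNIV. char_weight B n x c * f c) mod 2^L"
proof -
  have "(\<Sum>c\<in>UNIV. char_weight B n x c * f c)
      = (\<Sum>c\<in>UNIV. \<Sum>i<n. if x ! i = c then B ^ (n - 1 - i) * f (x ! i) else 0)"
    unfolding char_weight_def sum_distrib_right by (intro sum.cong refl) auto
  also have "\<dots> = (\<Sum>i<n. \<Sum>c\<in>UNIV. if x ! i = c then B ^ (n - 1 - i) * f (x ! i) else 0)"
    by (rule sum.swap)
  also have "\<dots> = (\<Sum>i<n. B ^ (n - 1 - i) * f (x ! i))" by simp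
  finally show ?thesis unfolding ngram_hash_def by simp
qed

lemma sum_char_weight:
  "(\<Sum>c\<in>(UNIV::'a::finite set). char_weight B n x c) = (\<Sum>i<n. B ^ (n - 1 - i))"
  unfolding char_weight_def by (subst sum.swap) simp

lemma odd_power_sum_iff:
  fixes B :: int
  assumes "n \<ge> 1"
  shows "odd (\<Sum>i<n. B ^ (n - 1 - i)) \<longleftrightarrow> even B \<or> odd n"
proof (cases "even B")
  case True
  then have "{i\<in>{..<n}. odd (B ^ (n - 1 - i))} = {n - 1}"
    using assms by (auto simp: even_power)
  then show ?thesis using True by (simp add: even_sum_iff)
next
  case False
  then have "{i\<in>{..<n}. odd (B ^ (n - 1 - i))} = {..<n}" by (auto simp: even_power)
  then show ?thesis using False by (simp add: even_sum_iff)
qed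

lemma prob_recursive_hash:
  "measure_pmf.prob (recursive_hash L B n) A = measure_pmf.prob (char_hash L) {f. ngram_hash L B n f \<in> A}"
  by (simp add: recursive_hash_def vimage_def)

text \<open>Part (ii): an odd total weight forces an odd weight, hence uniformity.\<close>

lemma recursive_hash_uniform:
  assumes "n \<ge> 1" and "even B \<or> odd n"
  shows "uniform_hash (recursive_hash L B n :: ('a::finite list \<Rightarrow> int) pmf) (ngrams n) L"
  unfolding uniform_hash_def
proof (intro ballI)
  fix x :: "'a list" and y :: int
  assume y: "y \<in> {0..<2^L}"
  have "odd (\<Sum>c\<in>(UNIV::'a set). char_weight B n x c)"
    unfolding sum_char_weight using odd_power_sum_iff assms by blast
  then obtain c0 where "odd (char_weight B n x c0)" by (metis dvd_sum)
  from prob_linear_form_odd[of "char_weight B n x" c0 y L, OF this y]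
  show "measure_pmf.prob (recursive_hash L B n) {h. h x = y} = 1 / 2^L"
    by (simp add: prob_recursive_hash ngram_hash_linear_form)
qed

text \<open>Part (i): with an even total weight the constant n-gram never hashes to 1.\<close>

lemma recursive_hash_not_uniform:
  assumes L: "L \<ge> 1" and "odd B" and "even n"
  shows "\<exists>x\<in>ngrams n. \<exists>y\<in>{0..<2^L}.
           measure_pmf.prob (recursive_hash L B n :: ('a::finite list \<Rightarrow> int) pmf) {h. h x = y} \<noteq> 1 / 2^L"
proof -
  fix c :: 'a
  define x where "x = replicate n c"
  have "even (\<Sum>i<n. B ^ (n - 1 - i))" using odd_power_sum_iff[of n B] assms by (cases n) auto
  moreover have "even ((2::int) ^ L)" using L by simp
  ultimately have "even (ngram_hash L B n f x)" for f
    by (simp add: ngram_hash_def x_def dvd_mod flip: sum_distrib_right)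
  then have "ngram_hash L B n f x \<noteq> 1" for f by (metis odd_one)
  then have "{f. ngram_hash L B n f \<in> {h. h x = 1}} = {}" by simp
  then have "measure_pmf.prob (recursive_hash L B n) {h. h x = 1} \<noteq> 1 / 2^L"
    by (simp add: prob_recursive_hash)
  moreover have "x \<in> ngrams n" "(1::int) \<in> {0..<2^L}"
    using L by (simp_all add: ngrams_def x_def one_less_power)
  ultimately show ?thesis by blast
qed

lemma dvd_double_of_mod_half:
  fixes x d :: int
  assumes "x mod (2 * d) \<in> {0, d}"
  shows "2 * d dvd 2 * x"
proof -
  have "2 * x = 2 * d * (2 * (x div (2 * d))) + 2 * (x mod (2 * d))"
    using div_mult_mod_eq[of x "2 * d"] by (simp add: algebra_simps)
  moreover have "2 * d dvd 2 * (x mod (2 * d))" using assms by auto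
  ultimately show ?thesis by (metis dvd_add dvd_triv_left)
qed

text \<open>Two n-grams whose hash difference is an even multiple of \<open>h1 a - h1 b\<close> collide at
  least when \<open>h1 a - h1 b\<close> is \<open>0\<close> or \<open>2^(L-1)\<close> mod \<open>2^L\<close>, each of probability \<open>2^-L\<close>.\<close>

lemma recursive_hash_collision_prob:
  fixes x y :: "'a::finite list" and a b :: 'a and k :: int
  assumes L: "L \<ge> 1" and ab: "a \<noteq> b" and k: "even k"
    and diff: "\<And>f. (\<Sum>i<n. B^(n-1-i) * f (x!i)) - (\<Sum>i<n. B^(n-1-i) * f (y!i)) = k * (f a - f b)"
  shows "measure_pmf.prob (recursive_hash L B n) {h. h x = h y} \<ge> 2 / 2^L"
proof -
  define \<delta> :: "'a \<Rightarrow> int" where "\<delta> c = of_bool (c = a) - of_bool (c = b)" for c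
  have \<delta>_form: "(\<Sum>c\<in>UNIV. \<delta> c * f c) = f a - f b" for f :: "'a \<Rightarrow> int"
    by (simp add: \<delta>_def left_diff_distrib sum_subtractf)
  define D where "D r = {f :: 'a \<Rightarrow> int. (f a - f b) mod 2^L = r}" for r
  define d :: int where "d = 2^(L-1)"
  have two_d: "2 * d = 2^L" using L by (simp add: d_def power_Suc[symmetric])
  have "odd (\<delta> a)" using ab by (simp add: \<delta>_def)
  then have prob_D: "measure_pmf.prob (char_hash L) (D r) = 1 / 2^L" if "r \<in> {0..<2^L}" for r
    using prob_linear_form_odd[of \<delta> a r L] that by (simp add: D_def \<delta>_form)
  have "D 0 \<union> D d \<subseteq> {f. ngram_hash L B n f \<in> {h. h x = h y}}"
  proof
    fix f assume "f \<in> D 0 \<union> D d"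
    then have "2 * d dvd 2 * (f a - f b)"
      by (intro dvd_double_of_mod_half) (auto simp: D_def two_d)
    then have "2^L dvd j * (2 * (f a - f b))" for j by (simp only: two_d dvd_mult)
    moreover obtain j where "k = 2 * j" using k by blast
    ultimately have "2^L dvd k * (f a - f b)" by (simp add: mult.assoc mult.left_commute)
    then have "ngram_hash L B n f x = ngram_hash L B n f y"
      unfolding ngram_hash_def mod_eq_dvd_iff diff .
    then show "f \<in> {f. ngram_hash L B n f \<in> {h. h x = h y}}" by simp
  qed
  then have "measure_pmf.prob (char_hash L) (D 0 \<union> D d)
           \<le> measure_pmf.prob (recursive_hash L B n) {h. h x = h y}"
    unfolding prob_recursive_hash by (rule measure_pmf.finite_measure_mono) simp
  moreover have "D 0 \<inter> D d = {}" by (auto simp: D_def d_def)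
  then have "measure_pmf.prob (char_hash L) (D 0 \<union> D d)
           = measure_pmf.prob (char_hash L) (D 0) + measure_pmf.prob (char_hash L) (D d)"
    by (intro measure_pmf.finite_measure_Union) simp_all
  moreover have "d \<in> {0..<2^L}" using two_d L by (simp add: d_def)
  ultimately show ?thesis using prob_D[of 0] prob_D[of d] by simp
qed

lemma ngram_sum_Cons:
  fixes B :: int and f :: "'a \<Rightarrow> int"
  shows "(\<Sum>i<Suc m. B^(Suc m - 1 - i) * f ((c # r) ! i)) = B^m * f c + (\<Sum>i<m. B^(m-1-i) * f (r ! i))"
  unfolding sum.lessThan_Suc_shift by simp

text \<open>Such n-grams exist for \<open>n \<ge> 2\<close>: \<open>a a\<dots>a\<close> and \<open>b a\<dots>a\<close> (difference factor \<open>B^(n-1)\<close>)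
  when \<open>B\<close> is even, \<open>a b a\<dots>a\<close> and \<open>b a a\<dots>a\<close> (factor \<open>B^(n-1) - B^(n-2)\<close>) when \<open>B\<close> is odd.\<close>

lemma recursive_hash_colliding_ngrams:
  fixes a b :: "'a::finite" and B :: int
  assumes L: "L \<ge> 1" and n: "n \<ge> 2" and ab: "a \<noteq> b"
  shows "\<exists>w1\<in>ngrams n. \<exists>w2\<in>ngrams n. w1 \<noteq> w2 \<and>
           measure_pmf.prob (recursive_hash L B n :: ('a list \<Rightarrow> int) pmf) {h. h w1 = h w2} \<ge> 2 / 2^L"
proof -
  obtain m where m: "n = Suc (Suc m)" using n by (metis add_2_eq_Suc le_Suc_ex)
  show ?thesis
  proof (cases "even B")
    case True
    define w1 where "w1 = a # replicate (Suc m) a"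
    define w2 where "w2 = b # replicate (Suc m) a"
    have "even (B^(Suc m))" using True by simp
    moreover have "(\<Sum>i<n. B^(n-1-i) * f (w1!i)) - (\<Sum>i<n. B^(n-1-i) * f (w2!i)) = B^(Suc m) * (f a - f b)"
      for f :: "'a \<Rightarrow> int"
      unfolding m w1_def w2_def by (simp only: ngram_sum_Cons) (simp add: algebra_simps)
    ultimately have "measure_pmf.prob (recursive_hash L B n) {h. h w1 = h w2} \<ge> 2 / 2^L"
      by (rule recursive_hash_collision_prob[OF L ab, where B = B and n = n and x = w1 and y = w2])
    moreover have "w1 \<in> ngrams n" "w2 \<in> ngrams n" "w1 \<noteq> w2"
      using ab by (simp_all add: ngrams_def w1_def w2_def m)
    ultimately show ?thesis by blast
  next
    case False
    define w1 where "w1 = a # b # replicate m a"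
    define w2 where "w2 = b # a # replicate m a"
    have "even (B^(Suc m) - B^m)" using False by simp
    moreover have "(\<Sum>i<n. B^(n-1-i) * f (w1!i)) - (\<Sum>i<n. B^(n-1-i) * f (w2!i)) = (B^(Suc m) - B^m) * (f a - f b)"
      for f :: "'a \<Rightarrow> int"
      unfolding m w1_def w2_def by (simp only: ngram_sum_Cons) (simp add: algebra_simps)
    ultimately have "measure_pmf.prob (recursive_hash L B n) {h. h w1 = h w2} \<ge> 2 / 2^L"
      by (rule recursive_hash_collision_prob[OF L ab, where B = B and n = n and x = w1 and y = w2])
    moreover have "w1 \<in> ngrams n" "w2 \<in> ngrams n" "w1 \<noteq> w2"
      using ab by (simp_all add: ngrams_def w1_def w2_def m)
    ultimately show ?thesis by blast
  qed
qed

lemma recursive_hash_range: "h \<in> set_pmf (recursive_hash L B n) \<Longrightarrow> h x \<in> {0..<2^L}"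
  by (auto simp: recursive_hash_def ngram_hash_def)

text \<open>A pairwise independent family with values in \<open>{0..<2^L}\<close> has collision probability
  exactly \<open>2^-L\<close>: sum the joint probabilities over the common value.\<close>

lemma pairwise_independent_collision_prob:
  fixes H :: "('b \<Rightarrow> int) pmf"
  assumes range: "\<And>h x. h \<in> set_pmf H \<Longrightarrow> h x \<in> {0..<2^L}"
    and indep: "pairwise_independent H X L" and x: "x1 \<in> X" "x2 \<in> X" "x1 \<noteq> x2"
  shows "measure_pmf.prob H {h. h x1 = h x2} = 1 / 2^L"
proof -
  let ?E = "\<lambda>y. {h. h x1 = y \<and> h x2 = y}"
  have "{h. h x1 = h x2} \<inter> set_pmf H = (\<Union>y\<in>{0..<2^L}. ?E y) \<inter> set_pmf H"
  proof (intro equalityI subsetI)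
    fix h assume h: "h \<in> {h. h x1 = h x2} \<inter> set_pmf H"
    then have "h x1 \<in> {0..<2^L}" using range[of h x1] by simp
    with h show "h \<in> (\<Union>y\<in>{0..<2^L}. ?E y) \<inter> set_pmf H"
      by (intro IntI UN_I[where a = "h x1"]) simp_all
  qed auto
  then have "measure_pmf.prob H ({h. h x1 = h x2} \<inter> set_pmf H)
           = measure_pmf.prob H ((\<Union>y\<in>{0..<2^L}. ?E y) \<inter> set_pmf H)" by (rule arg_cong)
  then have "measure_pmf.prob H {h. h x1 = h x2} = measure_pmf.prob H (\<Union>y\<in>{0..<2^L}. ?E y)"
    by (simp only: measure_Int_set_pmf)
  also have "\<dots> = (\<Sum>y\<in>{0..<2^L}. measure_pmf.prob H (?E y))"
    by (rule measure_pmf.finite_measure_finite_Union) (auto simp: disjoint_family_on_def)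
  also have "\<dots> = (\<Sum>y\<in>{0..<(2::int)^L}. 1 / 4^L)"
    using indep x by (simp add: pairwise_independent_def)
  also have "\<dots> = 2^L / (2^L * 2^L)" by (simp flip: power_mult_distrib)
  also have "\<dots> = 1 / 2^L" by simp
  finally show ?thesis .
qed

lemma exists_two_distinct:
  assumes "CARD('a) \<ge> 2"
  obtains a b :: "'a::finite" where "a \<noteq> b"
proof -
  have "\<not> card (UNIV :: 'a set) \<le> Suc 0" using assms by simp
  then show ?thesis using that card_le_Suc0_iff_eq[of "UNIV :: 'a set"] by auto
qed

lemma recursive_hash_not_universal:
  fixes B :: int
  assumes L: "L \<ge> 1" and n: "n \<ge> 2" and card: "CARD('a::finite) \<ge> 2"
  defines "H \<equiv> (recursive_hash L B n :: ('a list \<Rightarrow> int) pmf)"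
  shows "(\<exists>w1\<in>ngrams n. \<exists>w2\<in>ngrams n. w1 \<noteq> w2 \<and> measure_pmf.prob H {h. h w1 = h w2} > 1 / 2^L)
       \<and> \<not> pairwise_independent H (ngrams n) L
       \<and> \<not> two_universal H (ngrams n) L"
proof -
  obtain a b :: 'a where ab: "a \<noteq> b" using exists_two_distinct[OF card] by blast
  obtain w1 w2 where w: "w1 \<in> ngrams n" "w2 \<in> ngrams n" "w1 \<noteq> w2"
    and "measure_pmf.prob H {h. h w1 = h w2} \<ge> 2 / 2^L"
    using recursive_hash_colliding_ngrams[OF L n ab, of B] unfolding H_def by blast
  moreover have "(2::real) / 2^L > 1 / 2^L" by (simp add: divide_strict_right_mono)
  ultimately have collide: "measure_pmf.prob H {h. h w1 = h w2} > 1 / 2^L" by linarith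
  have "\<not> pairwise_independent H (ngrams n) L"
  proof
    assume indep: "pairwise_independent H (ngrams n) L"
    have "measure_pmf.prob H {h. h w1 = h w2} = 1 / 2^L"
      unfolding H_def using recursive_hash_range indep[unfolded H_def] w
      by (rule pairwise_independent_collision_prob)
    with collide show False by simp
  qed
  moreover have "\<not> two_universal H (ngrams n) L"
    unfolding two_universal_def using w collide by force
  ultimately show ?thesis using w collide by blast
qed

theorem mainTheorem3:
  fixes L n :: nat and B :: int
  assumes "n \<ge> 1" and "L \<ge> 1"
  defines "H \<equiv> (recursive_hash L B n :: ('a::finite list \<Rightarrow> int) pmf)"
  shows "(even n \<and> odd B \<longrightarrow>
            (\<exists>x\<in>ngrams n. \<exists>y\<in>{0..<2^L}. measure_pmf.prob H {h. h x = y} \<noteq> 1 / 2 ^ L))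
       \<and> (even B \<or> (odd B \<and> odd n) \<longrightarrow> uniform_hash H (ngrams n) L)
       \<and> (n \<ge> 2 \<and> CARD('a) \<ge> 2 \<longrightarrow>
            (\<exists>w1\<in>ngrams n. \<exists>w2\<in>ngrams n. w1 \<noteq> w2 \<and>
                measure_pmf.prob H {h. h w1 = h w2} > 1 / 2 ^ L)
            \<and> \<not> pairwise_independent H (ngrams n) L
            \<and> \<not> two_universal H (ngrams n) L)"
proof -
  have nonuniform: "even n \<and> odd B \<longrightarrow>
      (\<exists>x\<in>ngrams n. \<exists>y\<in>{0..<2^L}. measure_pmf.prob H {h. h x = y} \<noteq> 1 / 2 ^ L)"
    unfolding H_def using recursive_hash_not_uniform[OF \<open>L \<ge> 1\<close>] by blast
  have uniform: "even B \<or> (odd B \<and> odd n) \<longrightarrow> uniform_hash H (ngrams n) L"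
    unfolding H_def using recursive_hash_uniform[OF \<open>n \<ge> 1\<close>] by blast
  have not_universal: "n \<ge> 2 \<and> CARD('a) \<ge> 2 \<longrightarrow>
      (\<exists>w1\<in>ngrams n. \<exists>w2\<in>ngrams n. w1 \<noteq> w2 \<and> measure_pmf.prob H {h. h w1 = h w2} > 1 / 2 ^ L)
      \<and> \<not> pairwise_independent H (ngrams n) L \<and> \<not> two_universal H (ngrams n) L"
    unfolding H_def using recursive_hash_not_universal[OF \<open>L \<ge> 1\<close>] by blast
  from nonuniform uniform not_universal show ?thesis by (intro conjI)
qed

end
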